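(* Let $q$ be a power of $2$, $c\in\mathbb{F}_q^*$, $f(X)=X(X^{q-1}-c)^{q+1}$ on $\mathbb{F}_{q^2}$, with $a,\beta,g,L_{[u:v]},\mathbb{P}^1$ as in the context. For $L_{[u:v]}\in\mathbb{P}^1$, $g(u,v)=0$ if and only if $c=1$ and $v=0$. Moreover, for each $L_{[u:v]}\in\mathbb{P}^1$ with $g(u,v)\neq0$, the set $L_{[u:v]}\setminus\{0\}$ is the union of exactly $\frac{q-1}{d}$ cycles of length $d$ in $\mathcal{G}(f)$, where $d$ is the multiplicative order of $g(u,v)$ in $\mathbb{F}_q^*$.
   Context: $a\in\mathbb{F}_q$ with $\operatorname{Tr}(a)=1$ (absolute trace to $\mathbb{F}_2$), $\beta\in\mathbb{F}_{q^2}$ with $\beta^2+\beta+a=0$; every element of $\mathbb{F}_{q^2}$ is uniquely $x+y\beta$, $x,y\in\mathbb{F}_q$. For $(x,y)\neq(0,0)$, $g(x,y)=c^2+1+\frac{cy^2}{x^2+xy+y^2a}\in\mathbb{F}_q$, invariant under scaling $(x,y)$ by $\mathbb{F}_q^*$. For $(u,v)\in\mathbb{F}_q^2\setminus\{(0,0)\}$, $L_{[u:v]}=\{\lambda(u+v\beta):\lambda\in\mathbb{F}_q\}$ and $\mathbb{P}^1$ is the set of these $q+1$ lines. $\mathcal{G}(f)$ is the functional graph (vertices $\mathbb{F}_{q^2}$, edges $\langle x,f(x)\rangle$); a cycle of length $n$ consists of distinct $\alpha,f(\alpha),\dots,f^{(n-1)}(\alpha)$ with $f^{(n)}(\alpha)=\alpha$.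 *)

theory Defs
  imports Main
begin

definition subfield_q :: "nat \<Rightarrow> 'a::field set" where
  "subfield_q q = {x. x ^ q = x}"

text \<open>Absolute trace F_q -> F_2 for q = 2^k.\<close>
definition abs_trace :: "nat \<Rightarrow> 'a::field \<Rightarrow> 'a" where
  "abs_trace k x = (\<Sum>i<k. x ^ (2 ^ i))"

definition mult_order :: "'a::field \<Rightarrow> nat" where
  "mult_order x = (LEAST n. 0 < n \<and> x ^ n = 1)"

definition gfun :: "'a::field \<Rightarrow> 'a \<Rightarrow> 'a \<Rightarrow> 'a \<Rightarrow> 'a" where
  "gfun a c x y = c^2 + 1 + c * y^2 / (x^2 + x*y + y^2 * a)"

definition line :: "nat \<Rightarrow> 'a::field \<Rightarrow> 'a \<Rightarrow> 'a \<Rightarrow> 'a set" where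
  "line q \<beta> u v = {l * (u + v * \<beta>) | l. l \<in> subfield_q q}"

definition is_cycle :: "('a \<Rightarrow> 'a) \<Rightarrow> nat \<Rightarrow> 'a set \<Rightarrow> bool" where
  "is_cycle f n C \<longleftrightarrow> (\<exists>\<alpha>. 0 < n \<and> C = {(f ^^ i) \<alpha> | i. i < n}
      \<and> inj_on (\<lambda>i. (f ^^ i) \<alpha>) {..<n} \<and> (f ^^ n) \<alpha> = \<alpha>)"

end

theory Submission
  imports Defs "HOL-Number_Theory.Residues" "HOL-Computational_Algebra.Polynomial"
begin

text \<open>Write \<open>w = u + v\<beta>\<close>. Since \<open>Tr(a) = 1\<close>, the Frobenius \<open>x \<mapsto> x\<^sup>q\<close> sends \<open>\<beta>\<close> to
  \<open>\<beta> + 1\<close>, so \<open>w\<^sup>q = w + v\<close> and \<open>w w\<^sup>q = u\<^sup>2 + uv + av\<^sup>2\<close>. For \<open>\<lambda> \<in> F\<^sub>q\<^sup>*\<close> one has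
  \<open>(\<lambda>w)\<^sup>q\<^sup>-\<^sup>1 = w\<^sup>q\<^sup>-\<^sup>1\<close>, and expanding \<open>f(\<lambda>w)\<close> with the identity
  \<open>(w + cw\<^sup>q)(w\<^sup>q + cw) = w w\<^sup>q g(u,v)\<close> shows \<open>f(\<lambda>w) = g(u,v) \<lambda> w\<close>: on the line \<open>L\<^bsub>[u:v]\<^esub>\<close>
  the map \<open>f\<close> is multiplication of the coordinate \<open>\<lambda>\<close> by \<open>g = g(u,v) \<in> F\<^sub>q\<close>. When \<open>g \<noteq> 0\<close>
  every orbit on \<open>F\<^sub>q\<^sup>*\<close> is a cycle of length \<open>ord(g)\<close>, giving \<open>(q - 1)/ord(g)\<close> cycles.
  If \<open>g = 0\<close> then \<open>w = cw\<^sup>q\<close> and \<open>w\<^sup>q = cw\<close>, which forces \<open>c\<^sup>2 = 1\<close>, i.e. \<open>c = 1\<close>, and then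
  \<open>w\<^sup>q = w\<close>, i.e. \<open>v = 0\<close>.\<close>

lemma CHAR_eq_2_if_card_power_2:
  assumes "card (UNIV :: 'a::{field,finite} set) = 2 ^ n"
  shows "CHAR('a) = 2"
proof -
  have "prime CHAR('a)"
    by (intro prime_CHAR_semidom finite_imp_CHAR_pos) simp
  moreover have "CHAR('a) dvd 2 ^ n"
    using CHAR_dvd_CARD[where 'a='a] assms by simp
  ultimately show ?thesis
    by (metis prime_dvd_power primes_dvd_imp_eq two_is_prime_nat)
qed

lemma add_self_char_2:
  assumes "CHAR('a::comm_ring_1) = 2"
  shows "x + x = (0::'a)"
proof -
  have "(2::'a) = 0"
    using of_nat_CHAR[where 'a='a] assms by simp
  then show ?thesis
    by (metis mult_2 mult_zero_left)
qed

lemma uminus_char_2: "CHAR('a::comm_ring_1) = 2 \<Longrightarrow> - x = (x::'a)"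
  by (metis add_self_char_2 eq_neg_iff_add_eq_0)

lemma diff_char_2: "CHAR('a::comm_ring_1) = 2 \<Longrightarrow> x - y = x + (y::'a)"
  by (metis diff_conv_add_uminus uminus_char_2)

lemma power_add_char_2:
  "CHAR('a::comm_ring_1) = 2 \<Longrightarrow> q = 2 ^ k \<Longrightarrow> (x + y) ^ q = x ^ q + (y::'a) ^ q"
  by (rule freshmans_dream') auto

text \<open>The library's \<open>finite_field_power_card_eq_same\<close> needs the sort \<open>finite_field\<close>,
  which cannot be derived for a type variable of sort \<open>{field, finite}\<close>.\<close>
lemma power_card_UNIV_minus_1:
  assumes "(x::'a::{field,finite}) \<noteq> 0"
  shows "x ^ (card (UNIV :: 'a set) - 1) = 1"
proof -
  let ?U = "UNIV - {0} :: 'a set"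
  have "bij_betw ((*) x) ?U ?U"
    by (rule bij_betw_byWitness[of _ "\<lambda>y. y / x"]) (use assms in auto)
  have "x ^ card ?U * \<Prod>?U = (\<Prod>y\<in>?U. x * y)"
    by (simp add: prod.distrib)
  also have "\<dots> = \<Prod>?U"
    using \<open>bij_betw ((*) x) ?U ?U\<close> by (rule prod.reindex_bij_betw)
  finally have "x ^ card ?U = 1"
    using mult_cancel_right2 prod_zero_iff[of ?U "\<lambda>y. y"] by auto
  then show ?thesis
    by (simp add: card_Diff_singleton)
qed

lemma power_card_UNIV_eq_same: "(x::'a::{field,finite}) ^ card (UNIV :: 'a set) = x"
proof (cases "x = 0")
  case False
  have "card (UNIV :: 'a set) = Suc (card (UNIV :: 'a set) - 1)"
    by (simp add: finite_UNIV_card_ge_0)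
  then show ?thesis
    using power_card_UNIV_minus_1[OF False] by (metis power_Suc2 mult_1_left)
qed (simp add: finite_UNIV_card_ge_0)

lemma mult_order_pos_and_power:
  assumes "(x::'a::{field,finite}) \<noteq> 0"
  shows "0 < mult_order x \<and> x ^ mult_order x = 1"
proof -
  have "card {0, 1 :: 'a} \<le> card (UNIV :: 'a set)"
    by (rule card_mono) auto
  then have "\<exists>n. 0 < n \<and> x ^ n = 1"
    using power_card_UNIV_minus_1[OF assms] by (intro exI[of _ "card (UNIV :: 'a set) - 1"]) auto
  then show ?thesis
    unfolding mult_order_def by (rule LeastI_ex)
qed

lemma inj_on_power_mult_order:
  assumes "(x::'a::field) \<noteq> 0"
  shows "inj_on (\<lambda>i. x ^ i) {..<mult_order x}"
proof -
  have "x ^ i \<noteq> x ^ j" if "i < j" "j < mult_order x" for i j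
  proof
    assume "x ^ i = x ^ j"
    have "x ^ i * x ^ (j - i) = x ^ j"
      using \<open>i < j\<close> by (simp flip: power_add)
    also have "\<dots> = x ^ i * 1"
      using \<open>x ^ i = x ^ j\<close> by simp
    finally have "x ^ (j - i) = 1"
      using assms by simp
    then show False
      using not_less_Least[of "j - i" "\<lambda>n. 0 < n \<and> x ^ n = 1"] that
      unfolding mult_order_def by (meson diff_le_self le_less_trans zero_less_diff)
  qed
  then show ?thesis
    by (metis inj_onI lessThan_iff linorder_neqE_nat)
qed

lemma subfield_q_iff: "x \<in> subfield_q q \<longleftrightarrow> x ^ q = x"
  by (simp add: subfield_q_def)

lemma subfield_q_one: "1 \<in> subfield_q q"
  by (simp add: subfield_q_iff)

lemma subfield_q_mult: "x \<in> subfield_q q \<Longrightarrow> y \<in> subfield_q q \<Longrightarrow> x * y \<in> subfield_q q"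
  by (simp add: subfield_q_iff power_mult_distrib)

lemma subfield_q_divide: "x \<in> subfield_q q \<Longrightarrow> y \<in> subfield_q q \<Longrightarrow> x / y \<in> subfield_q q"
  by (simp add: subfield_q_iff power_divide)

lemma subfield_q_power: "x \<in> subfield_q q \<Longrightarrow> x ^ n \<in> subfield_q q"
  by (induction n) (auto intro: subfield_q_mult subfield_q_one)

lemma subfield_q_add:
  "CHAR('a::field) = 2 \<Longrightarrow> q = 2 ^ k \<Longrightarrow> x \<in> subfield_q q \<Longrightarrow> y \<in> subfield_q q
    \<Longrightarrow> x + (y::'a) \<in> subfield_q q"
  by (simp add: subfield_q_iff power_add_char_2)

lemma power_minus_1_eq_1_if_subfield_q:
  "x \<in> subfield_q q \<Longrightarrow> x \<noteq> 0 \<Longrightarrow> 0 < q \<Longrightarrow> x ^ (q - 1) = 1"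
  by (metis Suc_diff_1 mult_cancel_left1 power_Suc subfield_q_iff)

lemma card_subfield_q_le:
  assumes "2 \<le> q"
  shows "card (subfield_q q :: 'a::field set) \<le> q"
proof -
  define p :: "'a poly" where "p = monom 1 q + [:0, -1:]"
  have "degree p = q"
    unfolding p_def using assms by (subst degree_add_eq_left) (auto simp: degree_monom_eq)
  then have "p \<noteq> 0"
    using assms by auto
  have "subfield_q q = {x. poly p x = 0}"
    by (auto simp: p_def subfield_q_def poly_monom)
  then show ?thesis
    using card_poly_roots_bound[OF \<open>p \<noteq> 0\<close>] \<open>degree p = q\<close> by simp
qed

text \<open>The relative trace \<open>x \<mapsto> x^q + x\<close> maps into \<open>F\<^sub>q\<close> and its fibres are cosets of
  \<open>F\<^sub>q\<close>, so \<open>q\<^sup>2 \<le> |F\<^sub>q|\<^sup>2\<close>.\<close>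
lemma card_subfield_q_ge:
  assumes char: "CHAR('a::{field,finite}) = 2" and q: "q = 2 ^ k"
    and card: "card (UNIV :: 'a set) = q ^ 2"
  shows "q \<le> card (subfield_q q :: 'a set)"
proof -
  define K where "K = (subfield_q q :: 'a set)"
  define T where "T = (\<lambda>x::'a. x ^ q + x)"
  have "(x ^ q) ^ q = x" for x :: 'a
    using power_card_UNIV_eq_same[of x] card by (simp flip: power_mult add: power2_eq_square)
  then have T_in_K: "T x \<in> K" for x
    unfolding T_def K_def subfield_q_iff by (simp add: power_add_char_2[OF char q] add.commute)
  have fibre: "{x. T x = T x0} \<subseteq> (\<lambda>z. x0 + z) ` K" for x0
  proof
    fix x assume "x \<in> {x. T x = T x0}"
    then have "(x ^ q + x) - (x0 ^ q + x0) = 0"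
      unfolding T_def by simp
    moreover have "(x ^ q + x) - (x0 ^ q + x0) = (x - x0) ^ q - (x - x0)"
      by (simp add: diff_char_2[OF char] power_add_char_2[OF char q] add_ac)
    ultimately have "x - x0 \<in> K"
      by (simp add: K_def subfield_q_iff)
    then show "x \<in> (\<lambda>z. x0 + z) ` K"
      by (intro image_eqI[of _ _ "x - x0"]) auto
  qed
  have "card (UNIV :: 'a set) = card (\<Union>y\<in>T ` UNIV. {x. T x = y})"
    by (rule arg_cong[where f = card]) auto
  also have "\<dots> \<le> (\<Sum>y\<in>T ` UNIV. card {x. T x = y})"
    by (rule card_UN_le) simp
  also have "\<dots> \<le> (\<Sum>y\<in>T ` UNIV. card K)"
  proof (rule sum_mono)
    fix y assume "y \<in> T ` UNIV"
    then obtain x0 where "y = T x0"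
      by blast
    then have "card {x. T x = y} \<le> card ((\<lambda>z. x0 + z) ` K)"
      using fibre by (intro card_mono) auto
    also have "\<dots> \<le> card K"
      by (rule card_image_le) simp
    finally show "card {x. T x = y} \<le> card K" .
  qed
  also have "\<dots> \<le> card K * card K"
    using T_in_K by (auto intro!: mult_right_mono card_mono)
  finally have "q ^ 2 \<le> (card K) ^ 2"
    using card by (simp add: power2_eq_square)
  then show ?thesis
    unfolding K_def by (rule power2_le_imp_le) simp
qed

lemma card_subfield_q:
  assumes "CHAR('a::{field,finite}) = 2" and "q = 2 ^ k" and "1 \<le> k"
    and "card (UNIV :: 'a set) = q ^ 2"
  shows "card (subfield_q q :: 'a set) = q"
proof (rule antisym)
  have "(2::nat) ^ 1 \<le> 2 ^ k"
    using \<open>1 \<le> k\<close> by (rule power_increasing) simp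
  then show "card (subfield_q q :: 'a set) \<le> q"
    using \<open>q = 2 ^ k\<close> by (intro card_subfield_q_le) simp
  show "q \<le> card (subfield_q q :: 'a set)"
    using assms(1,2,4) by (rule card_subfield_q_ge)
qed

lemma artin_schreier_root_power_two_power:
  assumes char: "CHAR('a::field) = 2" and root: "\<beta>^2 + \<beta> + a = (0::'a)"
  shows "\<beta> ^ (2 ^ i) = \<beta> + (\<Sum>j<i. a ^ (2 ^ j))"
proof (induction i)
  case (Suc i)
  have "\<beta>^2 = \<beta> + a"
    using root by (metis add.assoc add_eq_0_iff2 uminus_char_2[OF char])
  have "\<beta> ^ (2 ^ Suc i) = (\<beta> ^ (2 ^ i)) ^ 2"
    by (simp add: power_mult[symmetric] mult.commute)
  also have "\<dots> = \<beta>^2 + (\<Sum>j<i. a ^ (2 ^ j)) ^ 2"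
    using Suc power_add_char_2[OF char, of 2 1] by simp
  also have "(\<Sum>j<i. a ^ (2 ^ j)) ^ 2 = (\<Sum>j<i. a ^ (2 ^ Suc j))"
    by (subst freshmans_dream_sum) (auto simp: char power_mult[symmetric] mult.commute)
  finally show ?case
    unfolding sum.lessThan_Suc_shift \<open>\<beta>^2 = \<beta> + a\<close> by (simp add: add_ac)
qed simp

definition cycle_of :: "('b \<Rightarrow> 'b) \<Rightarrow> nat \<Rightarrow> 'b \<Rightarrow> 'b set" where
  "cycle_of F n x = {(F ^^ i) x | i. i < n}"

lemma cycle_of_eq_range:
  assumes "(F ^^ n) x = x" and "0 < n"
  shows "cycle_of F n x = range (\<lambda>m. (F ^^ m) x)"
  unfolding cycle_of_def
  by (auto intro!: exI[of _ "_ mod n"] simp: assms funpow_mod_eq[OF assms(1)])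

lemma funpow_commute_apply: "(F ^^ m) ((F ^^ n) x) = (F ^^ n) ((F ^^ m) x)"
  by (metis add.commute comp_apply funpow_add)

lemma cycle_of_eq_if_mem:
  assumes "(F ^^ n) x = x" and "0 < n" and "y \<in> cycle_of F n x"
  shows "cycle_of F n y = cycle_of F n x"
proof -
  obtain j where "j < n" and y: "y = (F ^^ j) x"
    using assms(3) unfolding cycle_of_def by blast
  have "(F ^^ n) y = y"
    using assms(1) by (simp add: y funpow_commute_apply)
  have "(F ^^ (n - j)) y = (F ^^ (n - j + j)) x"
    by (simp add: y funpow_add)
  then have x: "x = (F ^^ (n - j)) y"
    using assms(1) \<open>j < n\<close> by simp
  have orbit_mono: "range (\<lambda>m. (F ^^ m) z) \<subseteq> range (\<lambda>m. (F ^^ m) z')"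
    if "z = (F ^^ i) z'" for z z' i
    using that by (auto simp flip: comp_apply[of "F ^^ _" "F ^^ i"] funpow_add)
  have "range (\<lambda>m. (F ^^ m) y) = range (\<lambda>m. (F ^^ m) x)"
    using orbit_mono[OF y] orbit_mono[OF x] by (rule equalityI)
  then show ?thesis
    using cycle_of_eq_range assms(1,2) \<open>(F ^^ n) y = y\<close> by metis
qed

lemma funpow_in_invariant_set:
  assumes "F ` S \<subseteq> S" and "x \<in> S"
  shows "(F ^^ i) x \<in> S"
  using assms by (induction i) auto

lemma partition_into_cycles:
  assumes "finite S" and "0 < d" and "F ` S \<subseteq> S"
    and periodic: "\<And>x. x \<in> S \<Longrightarrow> (F ^^ d) x = x"
    and inj: "\<And>x. x \<in> S \<Longrightarrow> inj_on (\<lambda>i. (F ^^ i) x) {..<d}"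
  shows "\<exists>P. (\<forall>C\<in>P. is_cycle F d C) \<and> \<Union>P = S \<and> card P = card S div d"
proof (intro exI conjI)
  let ?P = "cycle_of F d ` S"
  show "\<forall>C\<in>?P. is_cycle F d C"
    using assms unfolding is_cycle_def cycle_of_def by blast
  have sub: "cycle_of F d x \<subseteq> S" if "x \<in> S" for x
    using funpow_in_invariant_set[OF assms(3) that] unfolding cycle_of_def by blast
  have self: "x \<in> cycle_of F d x" for x
    using \<open>0 < d\<close> unfolding cycle_of_def by (auto intro: exI[of _ 0])
  show "\<Union>?P = S"
    using sub self by blast
  have card_cycle: "card (cycle_of F d x) = d" if "x \<in> S" for x
  proof -
    have "cycle_of F d x = (\<lambda>i. (F ^^ i) x) ` {..<d}"
      unfolding cycle_of_def by auto
    then show ?thesis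
      using inj[OF that] by (simp add: card_image)
  qed
  have disjoint: "C1 \<inter> C2 = {}" if C: "C1 \<in> ?P" "C2 \<in> ?P" "C1 \<noteq> C2" for C1 C2
  proof (rule ccontr)
    assume "C1 \<inter> C2 \<noteq> {}"
    then obtain x1 x2 z where "x1 \<in> S" "x2 \<in> S" "C1 = cycle_of F d x1" "C2 = cycle_of F d x2"
      and "z \<in> C1" "z \<in> C2"
      using C(1,2) by blast
    then have "C1 = cycle_of F d z" and "C2 = cycle_of F d z"
      using cycle_of_eq_if_mem periodic \<open>0 < d\<close> by metis+
    with \<open>C1 \<noteq> C2\<close> show False
      by simp
  qed
  have "d * card ?P = card (\<Union>?P)"
    by (rule card_partition) (use assms(1) \<open>\<Union>?P = S\<close> card_cycle disjoint in auto)
  then show "card ?P = card S div d"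
    using \<open>\<Union>?P = S\<close> \<open>0 < d\<close> by (metis nonzero_mult_div_cancel_left neq0_conv)
qed

locale line_in_quadratic_extension =
  fixes k q :: nat and a \<beta> c u v :: "'a::{field,finite}"
  assumes k: "1 \<le> k" and q: "q = 2 ^ k" and card_UNIV: "card (UNIV :: 'a set) = q ^ 2"
    and a: "a \<in> subfield_q q" and trace_a: "abs_trace k a = 1"
    and root: "\<beta>^2 + \<beta> + a = 0"
    and c: "c \<in> subfield_q q"
    and u: "u \<in> subfield_q q" and v: "v \<in> subfield_q q" and uv: "(u, v) \<noteq> (0, 0)"
begin

definition w :: 'a where "w = u + v * \<beta>"
definition w' :: 'a where "w' = w + v" \<comment> \<open>the conjugate \<open>w\<^sup>q\<close>, see \<open>w_power_q\<close>\<close>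
definition g :: 'a where "g = gfun a c u v"
definition f :: "'a \<Rightarrow> 'a" where "f x = x * (x ^ (q - 1) - c) ^ (q + 1)"

lemma char: "CHAR('a) = 2"
  using card_UNIV q by (intro CHAR_eq_2_if_card_power_2[of "2 * k"]) (simp add: power_mult mult.commute)

lemma q_pos: "0 < q"
  using q by simp

lemma power_q_add: "(x + y) ^ q = x ^ q + (y::'a) ^ q"
  by (rule power_add_char_2[OF char q])

lemma beta_power_q: "\<beta> ^ q = \<beta> + 1"
  using artin_schreier_root_power_two_power[OF char root, of k] trace_a q
  by (simp add: abs_trace_def)

lemma w_power_q: "w ^ q = w'"
  using u v unfolding w_def w'_def subfield_q_iff
  by (simp add: power_q_add power_mult_distrib beta_power_q algebra_simps)

lemma w'_power_q: "w' ^ q = w"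
  using v unfolding w'_def subfield_q_iff
  by (simp add: power_q_add w_power_q w'_def add_self_char_2[OF char] add.assoc)

lemma w_neq_0: "w \<noteq> 0"
proof
  assume "w = 0"
  then have "w' = 0"
    using w_power_q q_pos by (metis zero_power)
  with \<open>w = 0\<close> have "v = 0" and "u = 0"
    by (simp_all add: w'_def w_def)
  with uv show False
    by simp
qed

lemma w'_neq_0: "w' \<noteq> 0"
  using w_neq_0 w_power_q by (metis power_not_zero)

lemma add_w_w': "w + w' = v"
  by (simp add: w'_def add.assoc[symmetric] add_self_char_2[OF char])

lemma norm_w: "w * w' = u^2 + u*v + v^2 * a"
proof -
  have "w * w' = u^2 + (u*v*\<beta> + u*v*\<beta>) + u*v + v^2*(\<beta>^2 + \<beta>)"
    unfolding w'_def w_def by (simp add: algebra_simps power2_eq_square)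
  also have "\<beta>^2 + \<beta> = a"
    using root by (metis add_eq_0_iff2 uminus_char_2[OF char])
  finally show ?thesis
    by (simp add: add_self_char_2[OF char])
qed

lemma twisted_norm_w: "(w + c * w') * (w' + c * w) = (w * w') * g"
proof -
  have "(w + c * w') * (w' + c * w) = (1 + c^2) * (w * w') + c * (w + w')^2 - c * (2 * w * w')"
    by (simp add: algebra_simps power2_eq_square)
  also have "\<dots> = (1 + c^2) * (w * w') + c * v^2"
    using of_nat_CHAR[where 'a='a] by (simp add: add_w_w' char)
  also have "\<dots> = (w * w') * g"
    using w_neq_0 w'_neq_0 unfolding g_def gfun_def norm_w[symmetric] by (simp add: field_simps)
  finally show ?thesis .
qed

lemma g_in_subfield_q: "g \<in> subfield_q q"
  unfolding g_def gfun_def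
  by (intro subfield_q_add[OF char q] subfield_q_mult subfield_q_divide subfield_q_power
      subfield_q_one a c u v)

lemma f_on_line:
  assumes l: "l \<in> subfield_q q"
  shows "f (l * w) = (g * l) * w"
proof (cases "l = 0")
  case False
  define t where "t = w ^ (q - 1)"
  have w_t: "w * t = w'"
    unfolding t_def using w_power_q q_pos by (metis Suc_diff_1 power_Suc)
  have t_w': "t ^ q * w' = w"
    using w_t w'_power_q w_power_q by (metis power_mult_distrib mult.commute)
  have "(l * w) ^ (q - 1) = t"
    using power_minus_1_eq_1_if_subfield_q[OF l False q_pos] by (simp add: power_mult_distrib t_def)
  moreover have "(t - c) ^ (q + 1) = (t ^ q + c) * (t + c)"
    using c by (simp add: diff_char_2[OF char] power_q_add subfield_q_iff)
  ultimately have "w' * f (l * w) = l * ((t ^ q * w' + c * w') * (w * t + c * w))"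
    unfolding f_def by (simp add: algebra_simps)
  also have "\<dots> = w' * ((g * l) * w)"
    by (simp only: t_w' w_t twisted_norm_w) (simp add: algebra_simps)
  finally show ?thesis
    using w'_neq_0 by simp
qed (simp add: f_def)

lemma funpow_f_on_line:
  "l \<in> subfield_q q \<Longrightarrow> (f ^^ i) (l * w) = (g ^ i * l) * w"
proof (induction i)
  case (Suc i)
  then have "g ^ i * l \<in> subfield_q q"
    by (intro subfield_q_mult subfield_q_power g_in_subfield_q)
  have "(f ^^ Suc i) (l * w) = f ((g ^ i * l) * w)"
    using Suc.IH[OF Suc.prems] by simp
  also have "\<dots> = (g ^ Suc i * l) * w"
    using f_on_line[OF \<open>g ^ i * l \<in> subfield_q q\<close>] by (simp add: mult.assoc)
  finally show ?case .
qed simp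

lemma w_eq_mult_w'_iff: "w = c * w' \<longleftrightarrow> w' = c * w"
proof
  assume "w = c * w'"
  then have "w ^ q = (c * w') ^ q"
    by simp
  then show "w' = c * w"
    using c by (simp add: w_power_q w'_power_q power_mult_distrib subfield_q_iff)
next
  assume "w' = c * w"
  then have "w' ^ q = (c * w) ^ q"
    by simp
  then show "w = c * w'"
    using c by (simp add: w_power_q w'_power_q power_mult_distrib subfield_q_iff)
qed

lemma g_eq_0_iff: "g = 0 \<longleftrightarrow> c = 1 \<and> v = 0"
proof
  assume "c = 1 \<and> v = 0"
  then show "g = 0"
    unfolding g_def gfun_def using add_self_char_2[OF char, of 1] by simp
next
  assume "g = 0"
  then have "w + c * w' = 0 \<or> w' + c * w = 0"
    using twisted_norm_w by simp
  then have "w = c * w' \<or> w' = c * w"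
    by (metis add_eq_0_iff2 uminus_char_2[OF char])
  then have "w = c * w' \<and> w' = c * w"
    using w_eq_mult_w'_iff by blast
  then have "c * c = 1" and "w' = c * w"
    using w_neq_0 by (metis mult.assoc mult_cancel_right2)+
  have "(c + 1) ^ 2 = c ^ 2 + 1 ^ 2"
    by (rule power_add_char_2[OF char, of _ 1]) simp
  also have "\<dots> = 1 + 1"
    using \<open>c * c = 1\<close> by (simp add: power2_eq_square)
  finally have "c + 1 = 0"
    by (simp add: add_self_char_2[OF char])
  then have "c = 1"
    by (metis add_eq_0_iff2 uminus_char_2[OF char])
  with \<open>w' = c * w\<close> have "v = 0"
    by (simp add: w'_def)
  with \<open>c = 1\<close> show "c = 1 \<and> v = 0"
    by simp
qed

lemma line_minus_0:
  "line q \<beta> u v - {0} = (\<lambda>l. l * w) ` (subfield_q q - {0})"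
  using w_neq_0 unfolding line_def w_def by auto

lemma card_line_minus_0: "card (line q \<beta> u v - {0}) = q - 1"
proof -
  have "card ((\<lambda>l. l * w) ` (subfield_q q - {0})) = card (subfield_q q - {0 :: 'a})"
    using w_neq_0 by (intro card_image inj_onI) auto
  also have "\<dots> = q - 1"
    using card_subfield_q[OF char q k card_UNIV] q_pos by (simp add: subfield_q_iff)
  finally show ?thesis
    by (simp add: line_minus_0)
qed

lemma cycles_on_line:
  assumes "g \<noteq> 0"
  shows "\<exists>P. (\<forall>C\<in>P. is_cycle f (mult_order g) C) \<and> \<Union>P = line q \<beta> u v - {0}
           \<and> card P = (q - 1) div mult_order g"
proof -
  let ?d = "mult_order g"
  have d: "0 < ?d" "g ^ ?d = 1"
    using mult_order_pos_and_power[OF assms] by simp_all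
  have "\<exists>P. (\<forall>C\<in>P. is_cycle f ?d C) \<and> \<Union>P = line q \<beta> u v - {0}
          \<and> card P = card (line q \<beta> u v - {0}) div ?d"
  proof (rule partition_into_cycles)
    show "f ` (line q \<beta> u v - {0}) \<subseteq> line q \<beta> u v - {0}"
      using assms w_neq_0 f_on_line g_in_subfield_q
      by (auto simp: line_minus_0 intro!: imageI subfield_q_mult)
    fix x assume "x \<in> line q \<beta> u v - {0}"
    then obtain l where l: "l \<in> subfield_q q" "l \<noteq> 0" and x: "x = l * w"
      by (auto simp: line_minus_0)
    show "(f ^^ ?d) x = x"
      using d by (simp add: x funpow_f_on_line[OF l(1)])
    show "inj_on (\<lambda>i. (f ^^ i) x) {..<?d}"
      using inj_on_power_mult_order[OF assms] l(2) w_neq_0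
      by (auto simp: x funpow_f_on_line[OF l(1)] inj_on_def)
  qed (use d in simp_all)
  then show ?thesis
    by (simp add: card_line_minus_0)
qed

end

theorem mainTheorem9:
  fixes k q :: nat and a \<beta> c :: "'a::{field,finite}"
  assumes "1 \<le> k" and "q = 2 ^ k" and "card (UNIV :: 'a set) = q ^ 2"
    and "a \<in> subfield_q q" and "abs_trace k a = 1"
    and "\<beta>^2 + \<beta> + a = 0"
    and "c \<in> subfield_q q" and "c \<noteq> 0"
  defines "f \<equiv> (\<lambda>x::'a. x * (x ^ (q - 1) - c) ^ (q + 1))"
  shows "\<forall>u \<in> subfield_q q. \<forall>v \<in> subfield_q q. (u, v) \<noteq> (0, 0) \<longrightarrow>
           ((gfun a c u v = 0 \<longleftrightarrow> c = 1 \<and> v = 0) \<and>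
            (gfun a c u v \<noteq> 0 \<longrightarrow>
              (\<exists>S. (\<forall>C\<in>S. is_cycle f (mult_order (gfun a c u v)) C)
                 \<and> \<Union>S = line q \<beta> u v - {0}
                 \<and> card S = (q - 1) div mult_order (gfun a c u v))))"
proof (intro ballI impI)
  fix u v :: 'a assume "u \<in> subfield_q q" "v \<in> subfield_q q" "(u, v) \<noteq> (0, 0)"
  then interpret L: line_in_quadratic_extension k q a \<beta> c u v
    using assms by unfold_locales
  have "f = L.f"
    by (simp add: f_def L.f_def fun_eq_iff)
  then show "(gfun a c u v = 0 \<longleftrightarrow> c = 1 \<and> v = 0) \<and>
      (gfun a c u v \<noteq> 0 \<longrightarrow>
        (\<exists>S. (\<forall>C\<in>S. is_cycle f (mult_order (gfun a c u v)) C)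
           \<and> \<Union>S = line q \<beta> u v - {0}
           \<and> card S = (q - 1) div mult_order (gfun a c u v)))"
    using L.g_eq_0_iff L.cycles_on_line unfolding L.g_def by simp
qed

end
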